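(* Let $m,n_1,n_2\in\mathbb N$ and $M\in{\rm Mat}_m(\mathbb Z)$. Then $\Gamma_{M,\,n_1}$ embeds in $\Gamma_{M,\,n_1n_2}$ as an induced subgraph; that is, there is an injective map $f:V(\Gamma_{M,\,n_1})\to V(\Gamma_{M,\,n_1n_2})$ such that for all ${\bf x},{\bf y}$, $({\bf x},{\bf y})$ is an arc of $\Gamma_{M,\,n_1}$ if and only if $(f({\bf x}),f({\bf y}))$ is an arc of $\Gamma_{M,\,n_1n_2}$.
   Context: $\mathbb N$ is the set of positive integers and $\mathbb Z_n$ the integers modulo $n$. For $M\in{\rm Mat}_m(\mathbb Z)$, the move graph $\Gamma_{M,\,n}$ is the directed graph with vertex set $\mathbb Z_n^m$ and arc set $\{({\bf x},{\bf y}) : {\bf y}^T=M{\bf x}^T \text{ in } \mathbb Z_n^m\}$ (loops allowed). *)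

theory Defs
  imports Main
begin

text \<open>Vertices of the move graph Gamma_{M,n}: elements of (Z_n)^m, represented as
  functions nat => int with x i in {0..<n} for i < m and x i = 0 for i >= m.\<close>
definition mg_vertices :: "nat \<Rightarrow> nat \<Rightarrow> (nat \<Rightarrow> int) set" where
  "mg_vertices m n = {x. (\<forall>i<m. 0 \<le> x i \<and> x i < int n) \<and> (\<forall>i\<ge>m. x i = 0)}"

definition mg_arc :: "nat \<Rightarrow> (nat \<Rightarrow> nat \<Rightarrow> int) \<Rightarrow> nat \<Rightarrow> (nat \<Rightarrow> int) \<Rightarrow> (nat \<Rightarrow> int) \<Rightarrow> bool" where
  "mg_arc m M n x y \<longleftrightarrow> x \<in> mg_vertices m n \<and> y \<in> mg_vertices m n \<and>
     (\<forall>i<m. y i mod int n = (\<Sum>j<m. M i j * x j) mod int n)"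

end

theory Submission
  imports Defs
begin

text \<open>Multiplication by n2 is an injective group homomorphism from Z_(n1) onto the subgroup
  n2 Z_(n1 n2) of Z_(n1 n2), since n2 a = n2 b mod n1 n2 iff a = b mod n1. It commutes with the
  linear map M, so it carries the arcs of Gamma_(M,n1) to arcs and its non-arcs to non-arcs.\<close>

definition mg_scale :: "int \<Rightarrow> (nat \<Rightarrow> int) \<Rightarrow> nat \<Rightarrow> int" where
  "mg_scale k x = (\<lambda>i. k * x i)"

lemma mult_mod_mult_cancel_left:
  fixes a b k n :: int
  assumes "k \<noteq> 0"
  shows "(k * a) mod (k * n) = (k * b) mod (k * n) \<longleftrightarrow> a mod n = b mod n"
  using assms by (simp add: mod_mult_mult1)

lemma inj_mg_scale:
  assumes "k \<noteq> 0"
  shows "inj (mg_scale k)"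
  using assms by (auto intro: injI simp: mg_scale_def fun_eq_iff)

lemma mg_scale_in_mg_vertices:
  assumes "x \<in> mg_vertices m n1" and "n2 \<ge> 1"
  shows "mg_scale (int n2) x \<in> mg_vertices m (n1 * n2)"
proof -
  have "int n2 * x i < int (n1 * n2)" if "i < m" for i
  proof -
    have "x i < int n1" using assms(1) that by (simp add: mg_vertices_def)
    then have "int n2 * x i < int n2 * int n1"
      using assms(2) by (intro mult_strict_left_mono) simp_all
    then show ?thesis by (simp add: mult.commute)
  qed
  with assms(1) show ?thesis by (simp add: mg_vertices_def mg_scale_def)
qed

lemma mg_arc_mg_scale_iff:
  assumes "x \<in> mg_vertices m n1" and "y \<in> mg_vertices m n1" and "n2 \<ge> 1"
  shows "mg_arc m M (n1 * n2) (mg_scale (int n2) x) (mg_scale (int n2) y) \<longleftrightarrow> mg_arc m M n1 x y"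
proof -
  have linear: "(\<Sum>j<m. M i j * mg_scale (int n2) x j) = int n2 * (\<Sum>j<m. M i j * x j)" for i
    by (simp add: mg_scale_def sum_distrib_left algebra_simps)
  have modulus: "int (n1 * n2) = int n2 * int n1"
    by simp
  have "n2 \<noteq> 0"
    using assms(3) by simp
  then show ?thesis
    using assms mg_scale_in_mg_vertices[of _ m n1 n2]
    by (simp add: mg_arc_def linear modulus mult_mod_mult_cancel_left) (simp add: mg_scale_def)
qed

theorem theorem3p3:
  fixes m n1 n2 :: nat and M :: "nat \<Rightarrow> nat \<Rightarrow> int"
  assumes "m \<ge> 1" and "n1 \<ge> 1" and "n2 \<ge> 1"
  shows "\<exists>f. f ` mg_vertices m n1 \<subseteq> mg_vertices m (n1 * n2) \<and>
             inj_on f (mg_vertices m n1) \<and>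
             (\<forall>x\<in>mg_vertices m n1. \<forall>y\<in>mg_vertices m n1.
                mg_arc m M n1 x y \<longleftrightarrow> mg_arc m M (n1 * n2) (f x) (f y))"
proof (intro exI conjI)
  show "mg_scale (int n2) ` mg_vertices m n1 \<subseteq> mg_vertices m (n1 * n2)"
    using mg_scale_in_mg_vertices assms(3) by blast
  show "inj_on (mg_scale (int n2)) (mg_vertices m n1)"
    using inj_mg_scale[of "int n2"] assms(3) by (simp add: inj_on_subset[OF _ subset_UNIV])
  show "\<forall>x\<in>mg_vertices m n1. \<forall>y\<in>mg_vertices m n1.
          mg_arc m M n1 x y \<longleftrightarrow> mg_arc m M (n1 * n2) (mg_scale (int n2) x) (mg_scale (int n2) y)"
    using mg_arc_mg_scale_iff assms(3) by blast
qed

end
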